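(* In the structural equation model of the context, for every fixed $\gamma\in\mathbb{R}^q$ and every subset $S\subseteq\{1,\dots,q\}$, the population regression coefficient satisfies $\hat\beta(S)=\beta+\mathbf{C}(S)\gamma$.
   Context: Structural equation model: fix integers $d,q,r\ge1$. Let $N_z\in\mathbb{R}^r$, $N_w\in\mathbb{R}^q$, $N_x\in\mathbb{R}^d$, $N_y\in\mathbb{R}$ be mutually independent zero-mean random vectors with $\operatorname{Cov}(N_z)=I_r$, $\operatorname{Cov}(N_w)=\operatorname{diag}(\sigma_{w,1}^2,\dots,\sigma_{w,q}^2)$ with all $\sigma_{w,i}^2>0$, $\operatorname{Cov}(N_x)=\mathbf{D}_x$ a positive definite diagonal matrix, $\operatorname{Var}(N_y)=\sigma_y^2$. With $\mathbf{A}\in\mathbb{R}^{q\times r}$, $\mathbf{B}\in\mathbb{R}^{d\times r}$, $\beta\in\mathbb{R}^d$, $\gamma\in\mathbb{R}^q$: $Z=N_z$, $W=\mathbf{A}Z+N_w$, $X=\mathbf{B}Z+N_x$, $Y=\beta^\top X+\gamma^\top W+N_y$. For $S\subseteq\{1,\dots,q\}$, $S^c$ is its complement, $W_S$ the subvector, $\mathbf{A}_S$ the rows of $\mathbf{A}$ indexed by $S$, $\mathbf{D}_S=\operatorname{diag}(\sigma_{w,i}^2)_{i\in S}$. $\hat\beta(S)=(I_d,\mathbf{0})\operatorname{Var}((X,W_S))^{-1}\operatorname{Cov}((X,W_S),Y)$. $\mathbf{C}(S)\in\mathbb{R}^{d\times q}$ has zero columns for indices in $S$, and its columns indexed by $S^c$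 form $\mathbf{D}_x^{-1}\mathbf{B}(I_r+\mathbf{B}^\top\mathbf{D}_x^{-1}\mathbf{B}+\mathbf{A}_S^\top\mathbf{D}_S^{-1}\mathbf{A}_S)^{-1}\mathbf{A}_{S^c}^\top$. *)

theory Defs
  imports "HOL-Probability.Probability" "Jordan_Normal_Form.DL_Submatrix"
begin

definition cov :: "'a measure \<Rightarrow> ('a \<Rightarrow> real) \<Rightarrow> ('a \<Rightarrow> real) \<Rightarrow> real" where
  "cov M U V = (\<integral>\<omega>. (U \<omega> - (\<integral>x. U x \<partial>M)) * (V \<omega> - (\<integral>x. V x \<partial>M)) \<partial>M)"

definition var_mat :: "'a measure \<Rightarrow> (nat \<Rightarrow> 'a \<Rightarrow> real) \<Rightarrow> nat \<Rightarrow> real mat" where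
  "var_mat M V n = mat n n (\<lambda>(i,j). cov M (V i) (V j))"

definition cov_vec :: "'a measure \<Rightarrow> (nat \<Rightarrow> 'a \<Rightarrow> real) \<Rightarrow> nat \<Rightarrow> ('a \<Rightarrow> real) \<Rightarrow> real vec" where
  "cov_vec M V n Y = vec n (\<lambda>i. cov M (V i) Y)"

definition inv_mat :: "real mat \<Rightarrow> real mat" where
  "inv_mat A = (SOME B. B \<in> carrier_mat (dim_row A) (dim_row A) \<and>
      A * B = 1\<^sub>m (dim_row A) \<and> B * A = 1\<^sub>m (dim_row A))"

text \<open>Indices are 0-based: components 0..r-1 of Z, 0..q-1 of W, 0..d-1 of X.\<close>

definition sem_W :: "real mat \<Rightarrow> (nat \<Rightarrow> 'a \<Rightarrow> real) \<Rightarrow> (nat \<Rightarrow> 'a \<Rightarrow> real) \<Rightarrow> nat \<Rightarrow> 'a \<Rightarrow> real" where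
  "sem_W A Nz Nw i \<omega> = (\<Sum>k<dim_col A. A $$ (i,k) * Nz k \<omega>) + Nw i \<omega>"

definition sem_X :: "real mat \<Rightarrow> (nat \<Rightarrow> 'a \<Rightarrow> real) \<Rightarrow> (nat \<Rightarrow> 'a \<Rightarrow> real) \<Rightarrow> nat \<Rightarrow> 'a \<Rightarrow> real" where
  "sem_X B Nz Nx i \<omega> = (\<Sum>k<dim_col B. B $$ (i,k) * Nz k \<omega>) + Nx i \<omega>"

definition sem_Y :: "real mat \<Rightarrow> real mat \<Rightarrow> real vec \<Rightarrow> real vec \<Rightarrow>
    (nat \<Rightarrow> 'a \<Rightarrow> real) \<Rightarrow> (nat \<Rightarrow> 'a \<Rightarrow> real) \<Rightarrow> (nat \<Rightarrow> 'a \<Rightarrow> real) \<Rightarrow> ('a \<Rightarrow> real) \<Rightarrow> 'a \<Rightarrow> real" where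
  "sem_Y A B \<beta> \<gamma> Nz Nw Nx Ny \<omega> =
     (\<Sum>i<dim_vec \<beta>. \<beta> $ i * sem_X B Nz Nx i \<omega>) + (\<Sum>i<dim_vec \<gamma>. \<gamma> $ i * sem_W A Nz Nw i \<omega>) + Ny \<omega>"

text \<open>The regressor vector (X, W_S) of length d + |S|; W_S lists the components of W
  indexed by S in increasing order (pick S j is the j-th smallest element of S).\<close>
definition regressors :: "nat \<Rightarrow> nat set \<Rightarrow> (nat \<Rightarrow> 'a \<Rightarrow> real) \<Rightarrow> (nat \<Rightarrow> 'a \<Rightarrow> real) \<Rightarrow> nat \<Rightarrow> 'a \<Rightarrow> real" where
  "regressors d S X W j = (if j < d then X j else W (pick S (j - d)))"

definition beta_hat :: "'a measure \<Rightarrow> nat \<Rightarrow> nat set \<Rightarrow> (nat \<Rightarrow> 'a \<Rightarrow> real) \<Rightarrow> (nat \<Rightarrow> 'a \<Rightarrow> real) \<Rightarrow> ('a \<Rightarrow> real) \<Rightarrow> real vec" where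
  "beta_hat M d S X W Y =
     (let n = d + card S; V = regressors d S X W
      in mat d n (\<lambda>(i,j). if i = j then 1 else 0) * inv_mat (var_mat M V n) *\<^sub>v cov_vec M V n Y)"

text \<open>The matrix C(S) (d x q): zero columns for indices in S; the columns indexed by
  S^c (in increasing order) form
  D_x^{-1} B (I_r + B^T D_x^{-1} B + A_S^T D_S^{-1} A_S)^{-1} A_{S^c}^T.\<close>
definition C_mat :: "nat \<Rightarrow> (nat \<Rightarrow> real) \<Rightarrow> real mat \<Rightarrow> real mat \<Rightarrow> real mat \<Rightarrow> nat set \<Rightarrow> real mat" where
  "C_mat q sw Dx A B S =
     (let r = dim_col A; d = dim_row B; Sc = {0..<q} - S;
          AS = submatrix A S UNIV; ASc = submatrix A Sc UNIV;
          DS = mat (card S) (card S) (\<lambda>(i,j). if i = j then sw (pick S i) else 0);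
          K = 1\<^sub>m r + transpose_mat B * inv_mat Dx * B + transpose_mat AS * inv_mat DS * AS;
          G = inv_mat Dx * B * inv_mat K * transpose_mat ASc
      in mat d q (\<lambda>(i,j). if j \<in> S then 0 else G $$ (i, card {a \<in> Sc. a < j})))"

text \<open>The four independent noise vectors as blocks 0 (N_z), 1 (N_w), 2 (N_x), 3 (N_y).\<close>
definition noise_block :: "(nat \<Rightarrow> 'a \<Rightarrow> real) \<Rightarrow> (nat \<Rightarrow> 'a \<Rightarrow> real) \<Rightarrow> (nat \<Rightarrow> 'a \<Rightarrow> real) \<Rightarrow> ('a \<Rightarrow> real) \<Rightarrow> nat \<Rightarrow> nat \<Rightarrow> 'a \<Rightarrow> real" where
  "noise_block Nz Nw Nx Ny k = (case k of 0 \<Rightarrow> Nz | Suc 0 \<Rightarrow> Nw | Suc (Suc 0) \<Rightarrow> Nx | _ \<Rightarrow> (\<lambda>_. Ny))"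

definition block_dim :: "nat \<Rightarrow> nat \<Rightarrow> nat \<Rightarrow> nat \<Rightarrow> nat" where
  "block_dim r q d k = (case k of 0 \<Rightarrow> r | Suc 0 \<Rightarrow> q | Suc (Suc 0) \<Rightarrow> d | _ \<Rightarrow> 1)"

end

theory Submission
  imports Defs "Jordan_Normal_Form.Determinant"
begin

text \<open>The regressors V = (X, W_S) satisfy V = L Z + E, where L stacks B on top of A_S and
  E = (N_x, N_{w,S}) has the diagonal covariance D = diag(D_x, D_S). The response is
  Y = w^T V + gamma_{S^c}^T W_{S^c} + N_y with w = (beta, gamma_S), and the omitted regressors
  W_{S^c} = A_{S^c} Z + N_{w,S^c} are correlated with V only through the latent Z. Hence
  Var(V) = L L^T + D and Cov(V, Y) = Var(V) w + L h with h = A_{S^c}^T gamma_{S^c}, so that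
  Var(V)^-1 Cov(V, Y) = w + (L L^T + D)^-1 L h. The Woodbury identity
  (L L^T + D)^-1 L = D^-1 L K^-1, with K = I + L^T D^-1 L = I + B^T D_x^-1 B + A_S^T D_S^-1 A_S,
  turns the first d coordinates into beta + D_x^-1 B K^-1 A_{S^c}^T gamma_{S^c} = beta + C(S) gamma.\<close>

section \<open>Matrices\<close>

lemma inv_mat_eqI:
  assumes A: "A \<in> carrier_mat n n" and B: "B \<in> carrier_mat n n"
    and AB: "A * B = 1\<^sub>m n" and BA: "B * A = 1\<^sub>m n"
  shows "inv_mat A = B"
proof -
  let ?inverse = "\<lambda>B. B \<in> carrier_mat (dim_row A) (dim_row A) \<and>
    A * B = 1\<^sub>m (dim_row A) \<and> B * A = 1\<^sub>m (dim_row A)"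
  have "?inverse B" using A B AB BA by simp
  then have "?inverse (inv_mat A)" unfolding inv_mat_def by (rule someI)
  then have Ai: "inv_mat A \<in> carrier_mat n n" "inv_mat A * A = 1\<^sub>m n" using A by auto
  have "inv_mat A = inv_mat A * (A * B)" using Ai(1) AB by simp
  also have "\<dots> = (inv_mat A * A) * B" using Ai(1) A B by simp
  also have "\<dots> = B" using Ai(2) B by simp
  finally show ?thesis .
qed

lemma inv_mat_pos_def:
  fixes A :: "real mat"
  assumes A: "A \<in> carrier_mat n n"
    and pos_def: "\<And>v. v \<in> carrier_vec n \<Longrightarrow> v \<noteq> 0\<^sub>v n \<Longrightarrow> v \<bullet> (A *\<^sub>v v) > 0"
  shows "inv_mat A \<in> carrier_mat n n" "A * inv_mat A = 1\<^sub>m n" "inv_mat A * A = 1\<^sub>m n"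
proof -
  have "det A \<noteq> 0"
  proof
    assume "det A = 0"
    then obtain v where "v \<in> carrier_vec n" "v \<noteq> 0\<^sub>v n" "A *\<^sub>v v = 0\<^sub>v n"
      using det_0_iff_vec_prod_zero[OF A] by blast
    with pos_def show False by fastforce
  qed
  from det_non_zero_imp_unit[OF A this, unfolded Units_def, of "()"]
  obtain B where "B \<in> carrier_mat n n" "A * B = 1\<^sub>m n" "B * A = 1\<^sub>m n"
    by (auto simp: ring_mat_def)
  with inv_mat_eqI[OF A] show "inv_mat A \<in> carrier_mat n n" "A * inv_mat A = 1\<^sub>m n" "inv_mat A * A = 1\<^sub>m n"
    by simp_all
qed

lemma dim_mat_diag [simp]: "dim_row (mat_diag n f) = n" "dim_col (mat_diag n f) = n"
  by (simp_all add: mat_diag_def)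

lemma mat_diag_mult_vec:
  "v \<in> carrier_vec n \<Longrightarrow> mat_diag n f *\<^sub>v v = vec n (\<lambda>i. f i * v $ i)"
  by (intro eq_vecI) (auto simp: mat_diag_def scalar_prod_def if_distrib[of "\<lambda>x. x * _"] cong: if_cong)

lemma inv_mat_mat_diag:
  "(\<And>i. i < n \<Longrightarrow> f i \<noteq> 0) \<Longrightarrow> inv_mat (mat_diag n f) = mat_diag n (\<lambda>i. 1 / f i)"
  by (rule inv_mat_eqI[of _ n], simp_all only: mat_diag_dim mat_diag_diag)
    (auto intro!: eq_matI simp: mat_diag_def)

lemma mat_diag_of_diagonal_mat:
  "A \<in> carrier_mat n n \<Longrightarrow> diagonal_mat A \<Longrightarrow> A = mat_diag n (\<lambda>i. A $$ (i,i))"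
  by (intro eq_matI) (auto simp: mat_diag_def diagonal_mat_def)

lemma index_transpose_mult_mat_diag_mult:
  assumes "P \<in> carrier_mat n a" "Q \<in> carrier_mat n b" "k < a" "l < b"
  shows "(transpose_mat P * mat_diag n f * Q) $$ (k,l) = (\<Sum>m<n. P $$ (m,k) * f m * Q $$ (m,l))"
  using assms by (simp add: mat_diag_mult_right[of _ a n] scalar_prod_def lessThan_atLeast0)

lemma quadratic_form_mat_diag:
  fixes v :: "real vec"
  shows "v \<in> carrier_vec n \<Longrightarrow> v \<bullet> (mat_diag n f *\<^sub>v v) = (\<Sum>i<n. f i * (v $ i)\<^sup>2)"
  by (simp add: mat_diag_mult_vec scalar_prod_def lessThan_atLeast0 power2_eq_square algebra_simps)

lemma congruence_plus_mat_diag_pos_def: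
  fixes P :: "real mat"
  assumes P: "P \<in> carrier_mat n m"
    and g: "\<And>i. i < n \<Longrightarrow> g i \<ge> 0" and f: "\<And>i. i < m \<Longrightarrow> f i > 0"
    and v: "v \<in> carrier_vec m" "v \<noteq> 0\<^sub>v m"
  shows "v \<bullet> ((transpose_mat P * mat_diag n g * P + mat_diag m f) *\<^sub>v v) > 0"
proof -
  let ?u = "P *\<^sub>v v"
  have u: "?u \<in> carrier_vec n" using P v by simp
  have PT: "transpose_mat P \<in> carrier_mat m n" using P by simp
  have factor: "(transpose_mat P * mat_diag n g * P) *\<^sub>v v = transpose_mat P *\<^sub>v (mat_diag n g *\<^sub>v ?u)"
    using assoc_mult_mat_vec[of "transpose_mat P * mat_diag n g" m n P m v]
      assoc_mult_mat_vec[OF PT mat_diag_dim u] P PT v by simp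
  have "v \<bullet> ((transpose_mat P * mat_diag n g * P) *\<^sub>v v) = ?u \<bullet> (mat_diag n g *\<^sub>v ?u)"
  proof -
    have w: "mat_diag n g *\<^sub>v ?u \<in> carrier_vec n" by (rule mult_mat_vec_carrier[OF mat_diag_dim u])
    have "v \<bullet> (transpose_mat P *\<^sub>v (mat_diag n g *\<^sub>v ?u)) = (transpose_mat P *\<^sub>v (mat_diag n g *\<^sub>v ?u)) \<bullet> v"
      using PT w v(1) by (intro comm_scalar_prod) auto
    also have "\<dots> = (mat_diag n g *\<^sub>v ?u) \<bullet> ?u" by (rule transpose_vec_mult_scalar[OF P v(1) w])
    also have "\<dots> = ?u \<bullet> (mat_diag n g *\<^sub>v ?u)" by (rule comm_scalar_prod[OF w u])
    finally show ?thesis unfolding factor .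
  qed
  also have "\<dots> = (\<Sum>i<n. g i * (?u $ i)\<^sup>2)" by (rule quadratic_form_mat_diag[OF u])
  also have "\<dots> \<ge> 0" using g by (intro sum_nonneg) simp
  finally have psd: "v \<bullet> ((transpose_mat P * mat_diag n g * P) *\<^sub>v v) \<ge> 0" .
  obtain i where i: "i < m" "v $ i \<noteq> 0" using v by (auto simp: vec_eq_iff)
  have "v \<bullet> (mat_diag m f *\<^sub>v v) = (\<Sum>i<m. f i * (v $ i)\<^sup>2)" by (rule quadratic_form_mat_diag[OF v(1)])
  also have "\<dots> > 0" using f i by (intro sum_pos2[of _ i]) (auto simp: less_imp_le)
  finally have "v \<bullet> (mat_diag m f *\<^sub>v v) > 0" .
  moreover
  have G: "transpose_mat P * mat_diag n g * P \<in> carrier_mat m m"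
    by (rule mult_carrier_mat[OF mult_carrier_mat[OF PT mat_diag_dim] P])
  then have "v \<bullet> ((transpose_mat P * mat_diag n g * P + mat_diag m f) *\<^sub>v v)
      = v \<bullet> ((transpose_mat P * mat_diag n g * P) *\<^sub>v v) + v \<bullet> (mat_diag m f *\<^sub>v v)"
    using v(1) by (simp add: add_mult_distrib_mat_vec[OF G mat_diag_dim v(1)]
      scalar_prod_add_distrib[OF v(1) mult_mat_vec_carrier[OF G v(1)] mult_mat_vec_carrier[OF mat_diag_dim v(1)]])
  ultimately show ?thesis using psd by linarith
qed

lemma woodbury_mult:
  fixes L :: "'a::comm_ring_1 mat"
  assumes L: "L \<in> carrier_mat n r" and D: "D \<in> carrier_mat n n" and Dinv: "Dinv \<in> carrier_mat n n"
    and Kinv: "Kinv \<in> carrier_mat r r"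
    and D_Dinv: "D * Dinv = 1\<^sub>m n" and K_Kinv: "(1\<^sub>m r + transpose_mat L * Dinv * L) * Kinv = 1\<^sub>m r"
  shows "(L * transpose_mat L + D) * (Dinv * L * Kinv) = L"
proof -
  let ?T = "transpose_mat L"
  have T: "?T \<in> carrier_mat r n" using L by simp
  have X: "Dinv * L * Kinv \<in> carrier_mat n r" using Dinv L Kinv by simp
  have TDL: "?T * Dinv * L \<in> carrier_mat r r" using T Dinv L by simp
  have TD: "?T * Dinv \<in> carrier_mat r n" using T Dinv by simp
  have LK: "L * Kinv \<in> carrier_mat n r" using L Kinv by simp
  have "L * ?T * (Dinv * L * Kinv) = L * (?T * (Dinv * (L * Kinv)))"
    using assoc_mult_mat[OF L T X] assoc_mult_mat[OF Dinv L Kinv] by simp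
  also have "?T * (Dinv * (L * Kinv)) = ?T * Dinv * L * Kinv"
    using assoc_mult_mat[OF T Dinv LK] assoc_mult_mat[OF TD L Kinv] by simp
  finally have "L * ?T * (Dinv * L * Kinv) = L * (?T * Dinv * L * Kinv)" .
  moreover have "D * (Dinv * L * Kinv) = L * Kinv"
  proof -
    have "D * (Dinv * L * Kinv) = (D * Dinv) * (L * Kinv)"
      using assoc_mult_mat[OF D Dinv LK] assoc_mult_mat[OF Dinv L Kinv] by simp
    then show ?thesis using D_Dinv L Kinv by simp
  qed
  ultimately have "(L * ?T + D) * (Dinv * L * Kinv) = L * (?T * Dinv * L * Kinv) + L * Kinv"
    using L T D X by (simp add: add_mult_distrib_mat[of _ n n])
  also have "\<dots> = L * ((1\<^sub>m r + ?T * Dinv * L) * Kinv)"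
    using L TDL Kinv
    by (simp add: mult_add_distrib_mat[of _ n r] add_mult_distrib_mat[of _ r r] comm_add_mat[of _ n r])
  also have "\<dots> = L" using K_Kinv L by simp
  finally show ?thesis .
qed

lemma add_vec_right_commute:
  fixes a :: "'a::ab_semigroup_add vec"
  shows "a \<in> carrier_vec n \<Longrightarrow> b \<in> carrier_vec n \<Longrightarrow> c \<in> carrier_vec n \<Longrightarrow> a + b + c = a + c + b"
  by (rule eq_vecI) (simp_all add: add_ac)

section \<open>Reindexing along pick\<close>

lemma bij_betw_pick: "finite T \<Longrightarrow> bij_betw (pick T) {..<card T} T"
proof (rule bij_betw_imageI)
  show "inj_on (pick T) {..<card T}"
    by (rule inj_on_inverseI[where g = "\<lambda>j. card {a \<in> T. a < j}"]) (simp add: card_pick_le)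
  assume "finite T"
  show "pick T ` {..<card T} = T"
  proof
    show "pick T ` {..<card T} \<subseteq> T" by (auto intro: pick_in_set_le)
    show "T \<subseteq> pick T ` {..<card T}"
    proof
      fix j assume "j \<in> T"
      then have "card {a \<in> T. a < j} < card T"
        using \<open>finite T\<close> by (intro psubset_card_mono) auto
      with pick_card_in_set[OF \<open>j \<in> T\<close>] show "j \<in> pick T ` {..<card T}" by force
    qed
  qed
qed

lemma sum_pick: "finite T \<Longrightarrow> (\<Sum>m<card T. f (pick T m)) = (\<Sum>j\<in>T. f j)"
  by (rule sum.reindex_bij_betw[OF bij_betw_pick])

lemma sum_lessThan_add: "(\<Sum>m<a + b. f m) = (\<Sum>m<a. f m) + (\<Sum>m<b. f (a + m))" for a b :: nat
  by (induct b) (simp_all add: add.assoc)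

lemma sum_mult_sum_swap:
  fixes c :: "'i \<Rightarrow> 'a::comm_semiring_0"
  shows "(\<Sum>i\<in>I. c i * (\<Sum>k\<in>K. a i k * z k)) = (\<Sum>k\<in>K. (\<Sum>i\<in>I. c i * a i k) * z k)"
  by (simp add: sum_distrib_left sum_distrib_right mult.assoc) (rule sum.swap)

lemma submatrix_rows:
  assumes T: "T \<subseteq> {..<dim_row A}"
  shows "submatrix A T UNIV \<in> carrier_mat (card T) (dim_col A)"
    and "m < card T \<Longrightarrow> k < dim_col A \<Longrightarrow> submatrix A T UNIV $$ (m,k) = A $$ (pick T m, k)"
proof -
  have rows: "{i. i < dim_row A \<and> i \<in> T} = T" using T by auto
  have cols: "card {j. j < dim_col A \<and> j \<in> UNIV} = dim_col A" by simp
  show "submatrix A T UNIV \<in> carrier_mat (card T) (dim_col A)"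
    by (rule carrier_matI) (simp_all only: dim_submatrix rows cols)
  assume "m < card T" "k < dim_col A"
  then show "submatrix A T UNIV $$ (m,k) = A $$ (pick T m, k)"
    using submatrix_index[of m A T k UNIV] by (simp only: rows cols pick_UNIV)
qed

lemma transpose_submatrix_rows_mult_vec:
  assumes T: "T \<subseteq> {..<dim_row A}"
  shows "transpose_mat (submatrix A T UNIV) *\<^sub>v vec (card T) (\<lambda>m. v $ pick T m)
       = vec (dim_col A) (\<lambda>k. \<Sum>j\<in>T. A $$ (j,k) * v $ j)"
proof (rule eq_vecI)
  have fin: "finite T" using T finite_subset by blast
  fix k assume "k < dim_vec (vec (dim_col A) (\<lambda>k. \<Sum>j\<in>T. A $$ (j,k) * v $ j))"
  then have k: "k < dim_col A" by simp
  have "(transpose_mat (submatrix A T UNIV) *\<^sub>v vec (card T) (\<lambda>m. v $ pick T m)) $ k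
      = (\<Sum>m<card T. A $$ (pick T m, k) * v $ pick T m)"
    using submatrix_rows[OF T] k by (auto simp: scalar_prod_def lessThan_atLeast0 intro!: sum.cong)
  also have "\<dots> = (\<Sum>j\<in>T. A $$ (j,k) * v $ j)" by (rule sum_pick[OF fin])
  finally show "(transpose_mat (submatrix A T UNIV) *\<^sub>v vec (card T) (\<lambda>m. v $ pick T m)) $ k
      = vec (dim_col A) (\<lambda>k. \<Sum>j\<in>T. A $$ (j,k) * v $ j) $ k" using k by simp
qed (use submatrix_rows[OF T] in simp)

lemma mult_vec_scatter_columns:
  assumes T: "T \<subseteq> {..<q}" and G: "G \<in> carrier_mat d (card T)" and v: "v \<in> carrier_vec q"
  shows "mat d q (\<lambda>(i,j). if j \<in> T then G $$ (i, card {a \<in> T. a < j}) else 0) *\<^sub>v v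
       = G *\<^sub>v vec (card T) (\<lambda>m. v $ pick T m)"
proof (rule eq_vecI)
  have fin: "finite T" using T finite_subset by blast
  fix i assume "i < dim_vec (G *\<^sub>v vec (card T) (\<lambda>m. v $ pick T m))"
  then have i: "i < d" using G by simp
  have "(mat d q (\<lambda>(i,j). if j \<in> T then G $$ (i, card {a \<in> T. a < j}) else 0) *\<^sub>v v) $ i
      = (\<Sum>j<q. if j \<in> T then G $$ (i, card {a \<in> T. a < j}) * v $ j else 0)"
    using i v by (auto simp: scalar_prod_def lessThan_atLeast0 intro!: sum.cong)
  also have "\<dots> = (\<Sum>j\<in>T. G $$ (i, card {a \<in> T. a < j}) * v $ j)"
    using T by (simp add: sum.If_cases lessThan_def Int_absorb1 Collect_conj_eq)
  also have "\<dots> = (\<Sum>m<card T. G $$ (i, m) * v $ pick T m)"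
    by (simp add: sum_pick[OF fin, symmetric] card_pick_le)
  also have "\<dots> = (G *\<^sub>v vec (card T) (\<lambda>m. v $ pick T m)) $ i"
    using i G by (simp add: scalar_prod_def lessThan_atLeast0)
  finally show "(mat d q (\<lambda>(i,j). if j \<in> T then G $$ (i, card {a \<in> T. a < j}) else 0) *\<^sub>v v) $ i
      = (G *\<^sub>v vec (card T) (\<lambda>m. v $ pick T m)) $ i" .
qed (use G in simp)

section \<open>Covariance of uncorrelated sums\<close>

lemma integrable_mult_of_square_integrable:
  fixes f g :: "'a \<Rightarrow> real"
  assumes [measurable]: "f \<in> borel_measurable M" "g \<in> borel_measurable M"
    and "integrable M (\<lambda>x. (f x)\<^sup>2)" "integrable M (\<lambda>x. (g x)\<^sup>2)"
  shows "integrable M (\<lambda>x. f x * g x)"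
proof (rule Bochner_Integration.integrable_bound)
  show "integrable M (\<lambda>x. (f x)\<^sup>2 + (g x)\<^sup>2)" using assms by simp
  show "AE x in M. norm (f x * g x) \<le> norm ((f x)\<^sup>2 + (g x)\<^sup>2)"
  proof (rule AE_I2)
    fix x
    have "2 * \<bar>f x\<bar> * \<bar>g x\<bar> \<le> (f x)\<^sup>2 + (g x)\<^sup>2"
      using sum_squares_bound[of "\<bar>f x\<bar>" "\<bar>g x\<bar>"] by simp
    then have "\<bar>f x * g x\<bar> \<le> (f x)\<^sup>2 + (g x)\<^sup>2"
      using abs_mult[of "f x" "g x"] mult_nonneg_nonneg[of "\<bar>f x\<bar>" "\<bar>g x\<bar>"] by linarith
    then show "norm (f x * g x) \<le> norm ((f x)\<^sup>2 + (g x)\<^sup>2)" by simp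
  qed
qed measurable

lemma (in prob_space) cov_sum_uncorrelated:
  fixes \<xi> :: "'i \<Rightarrow> 'a \<Rightarrow> real"
  assumes I: "finite I"
    and meas: "\<And>p. p \<in> I \<Longrightarrow> \<xi> p \<in> borel_measurable M"
    and square: "\<And>p. p \<in> I \<Longrightarrow> integrable M (\<lambda>\<omega>. (\<xi> p \<omega>)\<^sup>2)"
    and centered: "\<And>p. p \<in> I \<Longrightarrow> expectation (\<xi> p) = 0"
    and uncorrelated: "\<And>p p'. p \<in> I \<Longrightarrow> p' \<in> I \<Longrightarrow> p \<noteq> p' \<Longrightarrow> cov M (\<xi> p) (\<xi> p') = 0"
  shows "cov M (\<lambda>\<omega>. \<Sum>p\<in>I. a p * \<xi> p \<omega>) (\<lambda>\<omega>. \<Sum>p\<in>I. b p * \<xi> p \<omega>)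
       = (\<Sum>p\<in>I. a p * b p * cov M (\<xi> p) (\<xi> p))"
proof -
  have integrable: "integrable M (\<xi> p)" if "p \<in> I" for p
    using square_integrable_imp_integrable[OF meas[OF that] square[OF that]] .
  have product: "integrable M (\<lambda>\<omega>. \<xi> p \<omega> * \<xi> p' \<omega>)" if "p \<in> I" "p' \<in> I" for p p'
    using integrable_mult_of_square_integrable[OF meas[OF that(1)] meas[OF that(2)] square[OF that(1)] square[OF that(2)]] .
  have moment: "cov M (\<xi> p) (\<xi> p') = expectation (\<lambda>\<omega>. \<xi> p \<omega> * \<xi> p' \<omega>)"
    if "p \<in> I" "p' \<in> I" for p p'
    unfolding cov_def using centered[OF that(1)] centered[OF that(2)] by simp
  have centered_sum: "expectation (\<lambda>\<omega>. \<Sum>p\<in>I. c p * \<xi> p \<omega>) = 0" for c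
    using integrable centered by (simp add: Bochner_Integration.integral_sum)
  have inner: "(\<Sum>p'\<in>I. a p * b p' * cov M (\<xi> p) (\<xi> p')) = a p * b p * cov M (\<xi> p) (\<xi> p)"
    if "p \<in> I" for p
  proof -
    have "(\<Sum>p'\<in>I. a p * b p' * cov M (\<xi> p) (\<xi> p'))
        = (\<Sum>p'\<in>I. if p' = p then a p * b p' * cov M (\<xi> p) (\<xi> p') else 0)"
      using uncorrelated[OF that] by (intro sum.cong refl) simp
    then show ?thesis using I that by simp
  qed
  have "cov M (\<lambda>\<omega>. \<Sum>p\<in>I. a p * \<xi> p \<omega>) (\<lambda>\<omega>. \<Sum>p\<in>I. b p * \<xi> p \<omega>)
      = expectation (\<lambda>\<omega>. (\<Sum>p\<in>I. a p * \<xi> p \<omega>) * (\<Sum>p\<in>I. b p * \<xi> p \<omega>))"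
    unfolding cov_def centered_sum by simp
  also have "\<dots> = expectation (\<lambda>\<omega>. \<Sum>p\<in>I. \<Sum>p'\<in>I. a p * b p' * (\<xi> p \<omega> * \<xi> p' \<omega>))"
    unfolding sum_product by (simp only: mult_ac)
  also have "\<dots> = (\<Sum>p\<in>I. \<Sum>p'\<in>I. a p * b p' * cov M (\<xi> p) (\<xi> p'))"
    using product moment by (simp add: Bochner_Integration.integral_sum)
  also have "\<dots> = (\<Sum>p\<in>I. a p * b p * cov M (\<xi> p) (\<xi> p))"
    using inner by (rule sum.cong[OF refl])
  finally show ?thesis .
qed

lemma (in prob_space) indep_var_components:
  fixes X :: "'k \<Rightarrow> 'i \<Rightarrow> 'a \<Rightarrow> real"
  assumes indep: "indep_vars (\<lambda>k. PiM (J k) (\<lambda>_. borel)) (\<lambda>k \<omega>. restrict (\<lambda>i. X k i \<omega>) (J k)) K"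
    and "k \<in> K" "l \<in> K" "k \<noteq> l" "i \<in> J k" "j \<in> J l"
  shows "indep_var borel (X k i) borel (X l j)"
proof -
  let ?M = "\<lambda>k. PiM (J k) (\<lambda>_. borel :: real measure)"
  let ?Y = "\<lambda>k \<omega>. restrict (\<lambda>i. X k i \<omega>) (J k)"
  have component: "(\<lambda>f. f k i) \<in> measurable (PiM {k} ?M) borel" if "i \<in> J k" for k i
  proof -
    have "(\<lambda>f. f k) \<in> measurable (PiM {k} ?M) (?M k)"
      by (rule measurable_component_singleton) simp
    moreover have "(\<lambda>x. x i) \<in> measurable (?M k) borel"
      using that by (rule measurable_component_singleton)
    ultimately show ?thesis by (rule measurable_compose)
  qed
  have "indep_var (PiM {k} ?M) (\<lambda>\<omega>. restrict (\<lambda>k. ?Y k \<omega>) {k})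
      (PiM {l} ?M) (\<lambda>\<omega>. restrict (\<lambda>k. ?Y k \<omega>) {l})"
    using assms by (intro indep_var_restrict[OF indep]) auto
  then have "indep_var borel ((\<lambda>f. f k i) \<circ> (\<lambda>\<omega>. restrict (\<lambda>k. ?Y k \<omega>) {k}))
      borel ((\<lambda>f. f l j) \<circ> (\<lambda>\<omega>. restrict (\<lambda>k. ?Y k \<omega>) {l}))"
    using component assms by (intro indep_var_compose) auto
  moreover have "(\<lambda>f. f k i) \<circ> (\<lambda>\<omega>. restrict (\<lambda>k. ?Y k \<omega>) {k}) = X k i"
    "(\<lambda>f. f l j) \<circ> (\<lambda>\<omega>. restrict (\<lambda>k. ?Y k \<omega>) {l}) = X l j"
    using assms by (auto simp: fun_eq_iff)
  ultimately show ?thesis by simp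
qed

section \<open>The structural equation model\<close>

lemma noise_block_simps:
  "noise_block Nz Nw Nx Ny 0 = Nz" "noise_block Nz Nw Nx Ny (Suc 0) = Nw"
  "noise_block Nz Nw Nx Ny 2 = Nx" "noise_block Nz Nw Nx Ny 3 = (\<lambda>_. Ny)"
  "block_dim r q d 0 = r" "block_dim r q d (Suc 0) = q" "block_dim r q d 2 = d" "block_dim r q d 3 = 1"
  by (simp_all add: noise_block_def block_dim_def numeral_eq_Suc)

locale linear_sem = prob_space M
  for M :: "'a measure" and d q r :: nat
    and Nz Nw Nx :: "nat \<Rightarrow> 'a \<Rightarrow> real" and Ny :: "'a \<Rightarrow> real"
    and sw :: "nat \<Rightarrow> real" and Dx :: "real mat" and sy :: real
    and A B :: "real mat" and \<beta> \<gamma> :: "real vec" and S :: "nat set" +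
  assumes A: "A \<in> carrier_mat q r" and B: "B \<in> carrier_mat d r"
    and \<beta>: "\<beta> \<in> carrier_vec d" and \<gamma>: "\<gamma> \<in> carrier_vec q"
    and indep: "indep_vars (\<lambda>k. PiM {..<block_dim r q d k} (\<lambda>_. borel))
      (\<lambda>k \<omega>. restrict (\<lambda>i. noise_block Nz Nw Nx Ny k i \<omega>) {..<block_dim r q d k}) {0..<4}"
    and Nz: "\<And>i. i < r \<Longrightarrow> Nz i \<in> borel_measurable M \<and> integrable M (\<lambda>\<omega>. (Nz i \<omega>)\<^sup>2)"
    and Nw: "\<And>i. i < q \<Longrightarrow> Nw i \<in> borel_measurable M \<and> integrable M (\<lambda>\<omega>. (Nw i \<omega>)\<^sup>2)"
    and Nx: "\<And>i. i < d \<Longrightarrow> Nx i \<in> borel_measurable M \<and> integrable M (\<lambda>\<omega>. (Nx i \<omega>)\<^sup>2)"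
    and Ny: "Ny \<in> borel_measurable M" "integrable M (\<lambda>\<omega>. (Ny \<omega>)\<^sup>2)"
    and mean_Nz: "\<And>i. i < r \<Longrightarrow> expectation (Nz i) = 0"
    and mean_Nw: "\<And>i. i < q \<Longrightarrow> expectation (Nw i) = 0"
    and mean_Nx: "\<And>i. i < d \<Longrightarrow> expectation (Nx i) = 0"
    and mean_Ny: "expectation Ny = 0"
    and cov_Nz: "\<And>i j. i < r \<Longrightarrow> j < r \<Longrightarrow> cov M (Nz i) (Nz j) = (if i = j then 1 else 0)"
    and sw_pos: "\<And>i. i < q \<Longrightarrow> sw i > 0"
    and cov_Nw: "\<And>i j. i < q \<Longrightarrow> j < q \<Longrightarrow> cov M (Nw i) (Nw j) = (if i = j then sw i else 0)"
    and Dx: "Dx \<in> carrier_mat d d" "diagonal_mat Dx"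
    and Dx_pos_def: "\<And>v. v \<in> carrier_vec d \<Longrightarrow> v \<noteq> 0\<^sub>v d \<Longrightarrow> v \<bullet> (Dx *\<^sub>v v) > 0"
    and cov_Nx: "\<And>i j. i < d \<Longrightarrow> j < d \<Longrightarrow> cov M (Nx i) (Nx j) = Dx $$ (i, j)"
    and cov_Ny: "cov M Ny Ny = sy"
    and S: "S \<subseteq> {0..<q}"
begin

abbreviation noise :: "nat \<times> nat \<Rightarrow> 'a \<Rightarrow> real" where
  "noise p \<equiv> noise_block Nz Nw Nx Ny (fst p) (snd p)"

definition noise_index :: "(nat \<times> nat) set" where
  "noise_index = (SIGMA k:{..<4}. {..<block_dim r q d k})"

lemma sum_noise_index:
  "(\<Sum>p\<in>noise_index. f p) = (\<Sum>k<r. f (0,k)) + (\<Sum>j<q. f (1,j)) + (\<Sum>i<d. f (2,i)) + f (3,0)"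
proof -
  have "(\<Sum>p\<in>noise_index. f p) = (\<Sum>k<4. \<Sum>i<block_dim r q d k. f (k,i))"
    unfolding noise_index_def by (simp add: sum.Sigma)
  then show ?thesis by (simp add: eval_nat_numeral block_dim_def)
qed

lemma noise_moments:
  assumes "p \<in> noise_index"
  shows "noise p \<in> borel_measurable M \<and> integrable M (\<lambda>\<omega>. (noise p \<omega>)\<^sup>2) \<and> expectation (noise p) = 0"
proof -
  obtain k i where p: "p = (k,i)" "k < 4" "i < block_dim r q d k"
    using assms by (auto simp: noise_index_def)
  then have "k = 0 \<or> k = 1 \<or> k = 2 \<or> k = 3" by auto
  then show ?thesis
    using p Nz Nw Nx Ny mean_Nz mean_Nw mean_Nx mean_Ny by (auto simp: noise_block_simps)
qed

lemma noise_uncorrelated: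
  assumes p: "p \<in> noise_index" and p': "p' \<in> noise_index" and "p \<noteq> p'"
  shows "cov M (noise p) (noise p') = 0"
proof (cases "fst p = fst p'")
  case False
  have "indep_var borel (noise p) borel (noise p')"
    using p p' False by (intro indep_var_components[OF indep]) (auto simp: noise_index_def)
  moreover have "integrable M (noise p)" "integrable M (noise p')"
    using noise_moments[OF p] noise_moments[OF p'] square_integrable_imp_integrable by blast+
  ultimately have "expectation (\<lambda>\<omega>. noise p \<omega> * noise p' \<omega>) = expectation (noise p) * expectation (noise p')"
    by (rule indep_var_lebesgue_integral)
  then show ?thesis using noise_moments[OF p] noise_moments[OF p'] by (simp add: cov_def)
next
  case True
  obtain k i i' where pp': "p = (k,i)" "p' = (k,i')" "i \<noteq> i'" "k < 4"
      "i < block_dim r q d k" "i' < block_dim r q d k"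
    using p p' True \<open>p \<noteq> p'\<close> by (cases p, cases p') (auto simp: noise_index_def)
  then have "k = 0 \<or> k = 1 \<or> k = 2 \<or> k = 3" by auto
  then show ?thesis
    using pp' cov_Nz cov_Nw cov_Nx Dx by (auto simp: noise_block_simps diagonal_mat_def)
qed

definition noise_comb ::
    "(nat \<Rightarrow> real) \<Rightarrow> (nat \<Rightarrow> real) \<Rightarrow> (nat \<Rightarrow> real) \<Rightarrow> real \<Rightarrow> 'a \<Rightarrow> real" where
  "noise_comb cz cw cx cy \<omega> =
     (\<Sum>k<r. cz k * Nz k \<omega>) + (\<Sum>j<q. cw j * Nw j \<omega>) + (\<Sum>i<d. cx i * Nx i \<omega>) + cy * Ny \<omega>"

lemma cov_noise_comb:
  "cov M (noise_comb cz cw cx cy) (noise_comb cz' cw' cx' cy') =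
     (\<Sum>k<r. cz k * cz' k) + (\<Sum>j<q. cw j * cw' j * sw j) + (\<Sum>i<d. cx i * cx' i * Dx $$ (i,i))
     + cy * cy' * sy"
proof -
  define coef :: "(nat \<Rightarrow> real) \<Rightarrow> (nat \<Rightarrow> real) \<Rightarrow> (nat \<Rightarrow> real) \<Rightarrow> real \<Rightarrow> nat \<times> nat \<Rightarrow> real"
    where "coef cz cw cx cy p = (if fst p = 0 then cz (snd p) else if fst p = 1 then cw (snd p)
      else if fst p = 2 then cx (snd p) else cy)" for cz cw cx cy p
  have comb: "noise_comb cz cw cx cy = (\<lambda>\<omega>. \<Sum>p\<in>noise_index. coef cz cw cx cy p * noise p \<omega>)"
    for cz cw cx cy
    by (simp add: fun_eq_iff noise_comb_def sum_noise_index coef_def noise_block_simps)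
  have "finite noise_index" by (simp add: noise_index_def)
  then have "cov M (noise_comb cz cw cx cy) (noise_comb cz' cw' cx' cy')
      = (\<Sum>p\<in>noise_index. coef cz cw cx cy p * coef cz' cw' cx' cy' p * cov M (noise p) (noise p))"
    unfolding comb using noise_moments noise_uncorrelated by (intro cov_sum_uncorrelated) auto
  also have "\<dots> = (\<Sum>k<r. cz k * cz' k) + (\<Sum>j<q. cw j * cw' j * sw j)
      + (\<Sum>i<d. cx i * cx' i * Dx $$ (i,i)) + cy * cy' * sy"
    using cov_Nz cov_Nw cov_Nx cov_Ny by (simp add: sum_noise_index coef_def noise_block_simps)
  finally show ?thesis .
qed

text \<open>Regressor m < d is X_m and regressor d + j is W_(pick S j); Lmat, mat_diag n noise_var,
  wvec, hvec and Kmat are the matrices L, D, w, h and K of the proof idea.\<close>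

abbreviation "n \<equiv> d + card S"
abbreviation "Sc \<equiv> {0..<q} - S"

definition Lmat :: "real mat" where
  "Lmat = mat n r (\<lambda>(m,k). if m < d then B $$ (m,k) else A $$ (pick S (m - d), k))"

definition noise_var :: "nat \<Rightarrow> real" where
  "noise_var m = (if m < d then Dx $$ (m,m) else sw (pick S (m - d)))"

definition wvec :: "real vec" where
  "wvec = vec n (\<lambda>m. if m < d then \<beta> $ m else \<gamma> $ pick S (m - d))"

definition hvec :: "real vec" where
  "hvec = vec r (\<lambda>k. \<Sum>j\<in>Sc. A $$ (j,k) * \<gamma> $ j)"

abbreviation "regs \<equiv> regressors d S (sem_X B Nz Nx) (sem_W A Nz Nw)"
abbreviation "SigmaV \<equiv> Lmat * transpose_mat Lmat + mat_diag n noise_var"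

definition Kmat :: "real mat" where
  "Kmat = 1\<^sub>m r + transpose_mat Lmat * mat_diag n (\<lambda>m. 1 / noise_var m) * Lmat"

abbreviation "AS \<equiv> submatrix A S UNIV"
abbreviation "DS \<equiv> mat (card S) (card S) (\<lambda>(i,j). if i = j then sw (pick S i) else 0)"

lemma model_dims: "dim_row Lmat = n" "dim_col Lmat = r" "dim_vec wvec = n" "dim_vec hvec = r"
  by (simp_all add: Lmat_def wvec_def hvec_def)

lemma model_carriers: "Lmat \<in> carrier_mat n r" "wvec \<in> carrier_vec n" "hvec \<in> carrier_vec r"
  by (simp_all add: Lmat_def wvec_def hvec_def)

lemma parameter_dims: "dim_row A = q" "dim_col A = r" "dim_row B = d" "dim_col B = r"
  "dim_vec \<beta> = d" "dim_vec \<gamma> = q"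
  using A B \<beta> \<gamma> by auto

lemma finite_S: "finite S"
  using S finite_subset by blast

lemma pick_S: "m < card S \<Longrightarrow> pick S m \<in> S \<and> pick S m < q"
  using S pick_in_set_le[of m S] by auto

lemma pick_S_inj: "m < card S \<Longrightarrow> m' < card S \<Longrightarrow> pick S m = pick S m' \<Longrightarrow> m = m'"
  using card_pick_le[of m S] card_pick_le[of m' S] by metis

lemma Dx_diag_pos: "i < d \<Longrightarrow> Dx $$ (i,i) > 0"
  using Dx_pos_def[of "unit_vec d i"] Dx(1) by simp

lemma noise_var_pos: "m < n \<Longrightarrow> noise_var m > 0"
  using Dx_diag_pos sw_pos pick_S[of "m - d"] by (simp add: noise_var_def)

lemma regressor_noise_comb:
  assumes m: "m < n"
  shows "regressors d S (sem_X B Nz Nx) (sem_W A Nz Nw) m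
    = noise_comb (\<lambda>k. Lmat $$ (m,k)) (\<lambda>j. if d \<le> m \<and> j = pick S (m - d) then 1 else 0)
        (\<lambda>i. if i = m then 1 else 0) 0"
proof (cases "m < d")
  case True
  then show ?thesis
    by (simp add: fun_eq_iff regressors_def sem_X_def noise_comb_def Lmat_def parameter_dims m
        if_distrib[of "\<lambda>x. x * _"] cong: if_cong)
next
  case False
  then have "pick S (m - d) < q" using m pick_S[of "m - d"] by simp
  with False show ?thesis
    by (simp add: fun_eq_iff regressors_def sem_W_def noise_comb_def Lmat_def parameter_dims m
        if_distrib[of "\<lambda>x. x * _"] cong: if_cong)
qed

lemma latent_coefficient:
  assumes k: "k < r"
  shows "(transpose_mat Lmat *\<^sub>v wvec + hvec) $ k
    = (\<Sum>i<d. \<beta> $ i * B $$ (i,k)) + (\<Sum>j<q. \<gamma> $ j * A $$ (j,k))"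
proof -
  have "(transpose_mat Lmat *\<^sub>v wvec) $ k = (\<Sum>m<n. Lmat $$ (m,k) * wvec $ m)"
    using k by (simp add: Lmat_def wvec_def scalar_prod_def lessThan_atLeast0)
  also have "\<dots> = (\<Sum>i<d. \<beta> $ i * B $$ (i,k)) + (\<Sum>m<card S. \<gamma> $ pick S m * A $$ (pick S m, k))"
    using k by (simp add: sum_lessThan_add Lmat_def wvec_def mult.commute)
  also have "(\<Sum>m<card S. \<gamma> $ pick S m * A $$ (pick S m, k)) = (\<Sum>j\<in>S. \<gamma> $ j * A $$ (j,k))"
    by (rule sum_pick[OF finite_S])
  finally have "(transpose_mat Lmat *\<^sub>v wvec) $ k = (\<Sum>i<d. \<beta> $ i * B $$ (i,k)) + (\<Sum>j\<in>S. \<gamma> $ j * A $$ (j,k))" .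
  moreover have "(\<Sum>j<q. \<gamma> $ j * A $$ (j,k))
      = (\<Sum>j\<in>S. \<gamma> $ j * A $$ (j,k)) + (\<Sum>j\<in>Sc. \<gamma> $ j * A $$ (j,k))"
    using sum.subset_diff[OF S, of "\<lambda>j. \<gamma> $ j * A $$ (j,k)"] by (simp add: lessThan_atLeast0)
  ultimately show ?thesis using k by (simp add: hvec_def mult.commute)
qed

lemma response_noise_comb:
  "sem_Y A B \<beta> \<gamma> Nz Nw Nx Ny
    = noise_comb (\<lambda>k. (transpose_mat Lmat *\<^sub>v wvec + hvec) $ k) (\<lambda>j. \<gamma> $ j) (\<lambda>i. \<beta> $ i) 1"
proof
  fix \<omega>
  have "sem_Y A B \<beta> \<gamma> Nz Nw Nx Ny \<omega>
    = (\<Sum>k<r. ((\<Sum>i<d. \<beta> $ i * B $$ (i,k)) + (\<Sum>j<q. \<gamma> $ j * A $$ (j,k))) * Nz k \<omega>)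
      + (\<Sum>j<q. \<gamma> $ j * Nw j \<omega>) + (\<Sum>i<d. \<beta> $ i * Nx i \<omega>) + Ny \<omega>"
    by (simp add: sem_Y_def sem_X_def sem_W_def parameter_dims distrib_left sum.distrib sum_mult_sum_swap
        distrib_right)
  then show "sem_Y A B \<beta> \<gamma> Nz Nw Nx Ny \<omega>
    = noise_comb (\<lambda>k. (transpose_mat Lmat *\<^sub>v wvec + hvec) $ k) (\<lambda>j. \<gamma> $ j) (\<lambda>i. \<beta> $ i) 1 \<omega>"
    by (simp add: noise_comb_def latent_coefficient)
qed

lemma var_mat_regressors: "var_mat M regs n = SigmaV"
proof (rule eq_matI)
  fix m m' assume "m < dim_row (Lmat * transpose_mat Lmat + mat_diag n noise_var)"
    "m' < dim_col (Lmat * transpose_mat Lmat + mat_diag n noise_var)"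
  then have m: "m < n" "m' < n" by (simp_all add: Lmat_def)
  have noise_part: "(\<Sum>j<q. (if d \<le> m \<and> j = pick S (m - d) then 1 else 0)
        * (if d \<le> m' \<and> j = pick S (m' - d) then 1 else 0) * sw j)
      + (\<Sum>i<d. (if i = m then 1 else 0) * (if i = m' then 1 else 0) * Dx $$ (i,i))
      = (if m = m' then noise_var m else 0)"
  proof (cases "m < d \<or> m' < d")
    case True
    then show ?thesis by (auto simp: noise_var_def if_distrib[of "\<lambda>x. x * _"] cong: if_cong)
  next
    case False
    have "pick S (m - d) < q" using m False pick_S[of "m - d"] by auto
    moreover have "pick S (m' - d) = pick S (m - d) \<longleftrightarrow> m' = m"
    proof
      assume "pick S (m' - d) = pick S (m - d)"
      moreover have "m' - d < card S" "m - d < card S" using m False by auto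
      ultimately have "m' - d = m - d" by (intro pick_S_inj[of "m' - d" "m - d"])
      then show "m' = m" using False by arith
    qed simp
    ultimately show ?thesis using False by (auto simp: noise_var_def if_distrib[of "\<lambda>x. x * _"] cong: if_cong)
  qed
  show "var_mat M regs n $$ (m, m') = (Lmat * transpose_mat Lmat + mat_diag n noise_var) $$ (m, m')"
    using m noise_part
    by (simp add: var_mat_def regressor_noise_comb cov_noise_comb mat_diag_def Lmat_def
        scalar_prod_def lessThan_atLeast0)
qed (simp_all add: var_mat_def Lmat_def)

lemma cov_vec_response:
  "cov_vec M regs n (sem_Y A B \<beta> \<gamma> Nz Nw Nx Ny)
    = Lmat *\<^sub>v (transpose_mat Lmat *\<^sub>v wvec + hvec) + mat_diag n noise_var *\<^sub>v wvec"
proof (rule eq_vecI)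
  define g where "g = transpose_mat Lmat *\<^sub>v wvec + hvec"
  have g: "dim_vec g = r" using model_carriers by (simp add: g_def)
  fix m assume "m < dim_vec (Lmat *\<^sub>v (transpose_mat Lmat *\<^sub>v wvec + hvec) + mat_diag n noise_var *\<^sub>v wvec)"
  then have m: "m < n" using model_carriers by simp
  have noise_part: "(\<Sum>j<q. (if d \<le> m \<and> j = pick S (m - d) then 1 else 0) * \<gamma> $ j * sw j)
      + (\<Sum>i<d. (if i = m then 1 else 0) * \<beta> $ i * Dx $$ (i,i)) = noise_var m * wvec $ m"
  proof (cases "m < d")
    case True
    then show ?thesis using m by (auto simp: noise_var_def wvec_def if_distrib[of "\<lambda>x. x * _"] cong: if_cong)
  next
    case False
    then have "pick S (m - d) < q" using m pick_S[of "m - d"] by auto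
    with False m show ?thesis by (auto simp: noise_var_def wvec_def if_distrib[of "\<lambda>x. x * _"] cong: if_cong)
  qed
  have "cov_vec M regs n (sem_Y A B \<beta> \<gamma> Nz Nw Nx Ny) $ m
      = (\<Sum>k<r. Lmat $$ (m,k) * g $ k) + noise_var m * wvec $ m"
    using m noise_part
    by (simp add: cov_vec_def regressor_noise_comb response_noise_comb cov_noise_comb g_def)
  also have "\<dots> = (Lmat *\<^sub>v g + mat_diag n noise_var *\<^sub>v wvec) $ m"
    using m g model_carriers by (simp add: mat_diag_mult_vec scalar_prod_def lessThan_atLeast0)
  finally show "cov_vec M regs n (sem_Y A B \<beta> \<gamma> Nz Nw Nx Ny) $ m
    = (Lmat *\<^sub>v (transpose_mat Lmat *\<^sub>v wvec + hvec) + mat_diag n noise_var *\<^sub>v wvec) $ m"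
    by (simp only: g_def)
qed (use model_carriers in \<open>simp add: cov_vec_def\<close>)

lemma Lmat_transpose_carrier: "transpose_mat Lmat \<in> carrier_mat r n"
  using model_carriers(1) by simp

lemma Lmat_congruence_carrier: "transpose_mat Lmat * mat_diag n f * Lmat \<in> carrier_mat r r"
  by (rule mult_carrier_mat[OF mult_carrier_mat[OF Lmat_transpose_carrier mat_diag_dim] model_carriers(1)])

lemma SigmaV_carrier: "SigmaV \<in> carrier_mat n n"
  by (rule add_carrier_mat[OF mat_diag_dim])

lemma Kmat_carrier: "Kmat \<in> carrier_mat r r"
  unfolding Kmat_def by (rule add_carrier_mat[OF Lmat_congruence_carrier])

lemma SigmaV_inverse: "inv_mat SigmaV \<in> carrier_mat n n" "inv_mat SigmaV * SigmaV = 1\<^sub>m n"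
proof -
  have "Lmat * transpose_mat Lmat = transpose_mat (transpose_mat Lmat) * mat_diag r (\<lambda>_. 1) * transpose_mat Lmat"
    using model_carriers(1) by simp
  then have "v \<bullet> (SigmaV *\<^sub>v v) > 0" if "v \<in> carrier_vec n" "v \<noteq> 0\<^sub>v n" for v
    using congruence_plus_mat_diag_pos_def[OF Lmat_transpose_carrier, of "\<lambda>_. 1" noise_var]
      noise_var_pos that by simp
  then show "inv_mat SigmaV \<in> carrier_mat n n" "inv_mat SigmaV * SigmaV = 1\<^sub>m n"
    using inv_mat_pos_def[OF SigmaV_carrier] by blast+
qed

lemma Kmat_inverse: "inv_mat Kmat \<in> carrier_mat r r" "Kmat * inv_mat Kmat = 1\<^sub>m r"
proof -
  have "Kmat = transpose_mat Lmat * mat_diag n (\<lambda>m. 1 / noise_var m) * Lmat + mat_diag r (\<lambda>_. 1)"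
    unfolding Kmat_def mat_diag_one by (rule comm_add_mat[OF one_carrier_mat Lmat_congruence_carrier])
  then have "v \<bullet> (Kmat *\<^sub>v v) > 0" if "v \<in> carrier_vec r" "v \<noteq> 0\<^sub>v r" for v
    using congruence_plus_mat_diag_pos_def[OF model_carriers(1), of "\<lambda>m. 1 / noise_var m" "\<lambda>_. 1"]
      noise_var_pos that by (simp add: less_imp_le)
  then show "inv_mat Kmat \<in> carrier_mat r r" "Kmat * inv_mat Kmat = 1\<^sub>m r"
    using inv_mat_pos_def[OF Kmat_carrier] by blast+
qed

lemma inv_SigmaV_mult_Lmat:
  "inv_mat SigmaV * Lmat = mat_diag n (\<lambda>m. 1 / noise_var m) * Lmat * inv_mat Kmat"
proof -
  let ?X = "mat_diag n (\<lambda>m. 1 / noise_var m) * Lmat * inv_mat Kmat"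
  have X: "?X \<in> carrier_mat n r"
    by (rule mult_carrier_mat[OF mult_carrier_mat[OF mat_diag_dim model_carriers(1)] Kmat_inverse(1)])
  have "mat_diag n noise_var * mat_diag n (\<lambda>m. 1 / noise_var m) = 1\<^sub>m n"
    unfolding mat_diag_diag by (auto intro!: eq_matI simp: mat_diag_def dest!: noise_var_pos)
  with Kmat_inverse have "SigmaV * ?X = Lmat"
    by (intro woodbury_mult[OF model_carriers(1) mat_diag_dim mat_diag_dim Kmat_inverse(1)])
      (simp_all add: Kmat_def)
  then have "inv_mat SigmaV * Lmat = (inv_mat SigmaV * SigmaV) * ?X"
    using assoc_mult_mat[OF SigmaV_inverse(1) SigmaV_carrier X] by simp
  then show ?thesis using SigmaV_inverse(2) X by simp
qed

lemma inv_var_mult_cov: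
  "inv_mat SigmaV *\<^sub>v (Lmat *\<^sub>v (transpose_mat Lmat *\<^sub>v wvec + hvec) + mat_diag n noise_var *\<^sub>v wvec)
    = wvec + mat_diag n (\<lambda>m. 1 / noise_var m) *\<^sub>v (Lmat *\<^sub>v (inv_mat Kmat *\<^sub>v hvec))"
proof -
  have Lw: "transpose_mat Lmat *\<^sub>v wvec \<in> carrier_vec r"
    by (rule mult_mat_vec_carrier[OF Lmat_transpose_carrier model_carriers(2)])
  have Sw: "SigmaV *\<^sub>v wvec \<in> carrier_vec n" by (rule mult_mat_vec_carrier[OF SigmaV_carrier model_carriers(2)])
  have Lh: "Lmat *\<^sub>v hvec \<in> carrier_vec n" by (rule mult_mat_vec_carrier[OF model_carriers(1,3)])
  have Kh: "inv_mat Kmat *\<^sub>v hvec \<in> carrier_vec r" by (rule mult_mat_vec_carrier[OF Kmat_inverse(1) model_carriers(3)])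
  have "Lmat *\<^sub>v (transpose_mat Lmat *\<^sub>v wvec + hvec) + mat_diag n noise_var *\<^sub>v wvec
      = SigmaV *\<^sub>v wvec + Lmat *\<^sub>v hvec"
  proof -
    let ?a = "(Lmat * transpose_mat Lmat) *\<^sub>v wvec" and ?c = "mat_diag n noise_var *\<^sub>v wvec"
    have LLT: "Lmat * transpose_mat Lmat \<in> carrier_mat n n"
      by (rule mult_carrier_mat[OF model_carriers(1) Lmat_transpose_carrier])
    have "Lmat *\<^sub>v (transpose_mat Lmat *\<^sub>v wvec + hvec) = ?a + Lmat *\<^sub>v hvec"
      using mult_add_distrib_mat_vec[OF model_carriers(1) Lw model_carriers(3)]
        assoc_mult_mat_vec[OF model_carriers(1) Lmat_transpose_carrier model_carriers(2)] by simp
    moreover have "SigmaV *\<^sub>v wvec = ?a + ?c"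
      by (rule add_mult_distrib_mat_vec[OF LLT mat_diag_dim model_carriers(2)])
    moreover have "?a + Lmat *\<^sub>v hvec + ?c = ?a + ?c + Lmat *\<^sub>v hvec"
      using mult_mat_vec_carrier[OF LLT model_carriers(2)] Lh mult_mat_vec_carrier[OF mat_diag_dim model_carriers(2)]
      by (rule add_vec_right_commute)
    ultimately show ?thesis by simp
  qed
  then have "inv_mat SigmaV *\<^sub>v (Lmat *\<^sub>v (transpose_mat Lmat *\<^sub>v wvec + hvec) + mat_diag n noise_var *\<^sub>v wvec)
      = inv_mat SigmaV *\<^sub>v (SigmaV *\<^sub>v wvec) + inv_mat SigmaV *\<^sub>v (Lmat *\<^sub>v hvec)"
    using mult_add_distrib_mat_vec[OF SigmaV_inverse(1) Sw Lh] by simp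
  also have "inv_mat SigmaV *\<^sub>v (SigmaV *\<^sub>v wvec) = (inv_mat SigmaV * SigmaV) *\<^sub>v wvec"
    by (rule assoc_mult_mat_vec[symmetric, OF SigmaV_inverse(1) SigmaV_carrier model_carriers(2)])
  also have "\<dots> = wvec" using SigmaV_inverse(2) model_carriers(2) by simp
  also have "inv_mat SigmaV *\<^sub>v (Lmat *\<^sub>v hvec) = (inv_mat SigmaV * Lmat) *\<^sub>v hvec"
    by (rule assoc_mult_mat_vec[symmetric, OF SigmaV_inverse(1) model_carriers(1,3)])
  also have "\<dots> = (mat_diag n (\<lambda>m. 1 / noise_var m) * Lmat) *\<^sub>v (inv_mat Kmat *\<^sub>v hvec)"
    unfolding inv_SigmaV_mult_Lmat
    by (rule assoc_mult_mat_vec[OF mult_carrier_mat[OF mat_diag_dim model_carriers(1)] Kmat_inverse(1) model_carriers(3)])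
  also have "\<dots> = mat_diag n (\<lambda>m. 1 / noise_var m) *\<^sub>v (Lmat *\<^sub>v (inv_mat Kmat *\<^sub>v hvec))"
    by (rule assoc_mult_mat_vec[OF mat_diag_dim model_carriers(1) Kh])
  finally show ?thesis .
qed

lemma inv_Dx: "inv_mat Dx = mat_diag d (\<lambda>i. 1 / Dx $$ (i,i))"
proof -
  have "Dx = mat_diag d (\<lambda>i. Dx $$ (i,i))" by (rule mat_diag_of_diagonal_mat[OF Dx])
  then have "inv_mat Dx = inv_mat (mat_diag d (\<lambda>i. Dx $$ (i,i)))" by (rule arg_cong)
  also have "\<dots> = mat_diag d (\<lambda>i. 1 / Dx $$ (i,i))"
    using Dx_diag_pos by (intro inv_mat_mat_diag) (metis less_irrefl)
  finally show ?thesis .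
qed

lemma beta_hat_eq:
  "beta_hat M d S (sem_X B Nz Nx) (sem_W A Nz Nw) (sem_Y A B \<beta> \<gamma> Nz Nw Nx Ny)
    = \<beta> + inv_mat Dx *\<^sub>v (B *\<^sub>v (inv_mat Kmat *\<^sub>v hvec))"
proof -
  let ?P = "mat d n (\<lambda>(i,j). if i = j then 1 else 0) :: real mat"
  let ?z = "inv_mat Kmat *\<^sub>v hvec"
  let ?u = "wvec + mat_diag n (\<lambda>m. 1 / noise_var m) *\<^sub>v (Lmat *\<^sub>v ?z)"
  have z: "?z \<in> carrier_vec r" by (rule mult_mat_vec_carrier[OF Kmat_inverse(1) model_carriers(3)])
  have cov: "cov_vec M regs n (sem_Y A B \<beta> \<gamma> Nz Nw Nx Ny) \<in> carrier_vec n"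
    by (simp add: cov_vec_def)
  have "beta_hat M d S (sem_X B Nz Nx) (sem_W A Nz Nw) (sem_Y A B \<beta> \<gamma> Nz Nw Nx Ny)
      = (?P * inv_mat SigmaV) *\<^sub>v cov_vec M regs n (sem_Y A B \<beta> \<gamma> Nz Nw Nx Ny)"
    unfolding beta_hat_def Let_def var_mat_regressors ..
  also have "\<dots> = ?P *\<^sub>v (inv_mat SigmaV *\<^sub>v cov_vec M regs n (sem_Y A B \<beta> \<gamma> Nz Nw Nx Ny))"
    by (rule assoc_mult_mat_vec[OF mat_carrier SigmaV_inverse(1) cov])
  also have "\<dots> = ?P *\<^sub>v ?u"
    unfolding cov_vec_response inv_var_mult_cov ..
  also have "\<dots> = \<beta> + inv_mat Dx *\<^sub>v (B *\<^sub>v ?z)"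
  proof (rule eq_vecI)
    fix i assume "i < dim_vec (\<beta> + inv_mat Dx *\<^sub>v (B *\<^sub>v ?z))"
    then have i: "i < d" using \<beta> by (simp add: inv_Dx)
    have "(?P *\<^sub>v ?u) $ i = ?u $ i"
      using i model_carriers z by (simp add: scalar_prod_def lessThan_atLeast0 if_distrib[of "\<lambda>x. x * _"] cong: if_cong)
    also have "\<dots> = \<beta> $ i + (B *\<^sub>v ?z) $ i / Dx $$ (i,i)"
    proof -
      have Lz: "Lmat *\<^sub>v ?z \<in> carrier_vec n" by (rule mult_mat_vec_carrier[OF model_carriers(1) z])
      have "row Lmat i = row B i" using i B by (intro eq_vecI) (simp_all add: Lmat_def)
      then have "(Lmat *\<^sub>v ?z) $ i = (B *\<^sub>v ?z) $ i" using i B by (simp add: model_dims)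
      then show ?thesis using i Lz by (simp add: mat_diag_mult_vec[OF Lz] wvec_def noise_var_def)
    qed
    also have "\<dots> = (\<beta> + inv_mat Dx *\<^sub>v (B *\<^sub>v ?z)) $ i"
      using i \<beta> B z by (simp add: inv_Dx mat_diag_mult_vec)
    finally show "(?P *\<^sub>v ?u) $ i = (\<beta> + inv_mat Dx *\<^sub>v (B *\<^sub>v ?z)) $ i" .
  qed (use \<beta> in \<open>simp add: inv_Dx\<close>)
  finally show ?thesis .
qed

lemma S_rows: "S \<subseteq> {..<dim_row A}"
  using S parameter_dims by auto

lemma AS_carrier: "AS \<in> carrier_mat (card S) r"
  using submatrix_rows(1)[OF S_rows] parameter_dims by simp

lemma AS_index: "m < card S \<Longrightarrow> k < r \<Longrightarrow> AS $$ (m,k) = A $$ (pick S m, k)"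
  using submatrix_rows(2)[OF S_rows] parameter_dims by simp

lemma inv_DS: "inv_mat DS = mat_diag (card S) (\<lambda>i. 1 / sw (pick S i))"
proof -
  have "DS = mat_diag (card S) (\<lambda>i. sw (pick S i))"
    by (rule eq_matI) (auto simp: mat_diag_def)
  then have "inv_mat DS = inv_mat (mat_diag (card S) (\<lambda>i. sw (pick S i)))" by (rule arg_cong)
  also have "\<dots> = mat_diag (card S) (\<lambda>i. 1 / sw (pick S i))"
    using sw_pos pick_S by (intro inv_mat_mat_diag) (metis less_irrefl)
  finally show ?thesis .
qed

lemma Lmat_congruence_split:
  "transpose_mat Lmat * mat_diag n (\<lambda>m. 1 / noise_var m) * Lmat
    = transpose_mat B * inv_mat Dx * B + transpose_mat AS * inv_mat DS * AS"
proof (rule eq_matI)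
  fix k l assume "k < dim_row (transpose_mat B * inv_mat Dx * B + transpose_mat AS * inv_mat DS * AS)"
    "l < dim_col (transpose_mat B * inv_mat Dx * B + transpose_mat AS * inv_mat DS * AS)"
  then have kl: "k < r" "l < r" using AS_carrier by auto
  have "(transpose_mat Lmat * mat_diag n (\<lambda>m. 1 / noise_var m) * Lmat) $$ (k,l)
      = (\<Sum>m<n. Lmat $$ (m,k) * (1 / noise_var m) * Lmat $$ (m,l))"
    by (rule index_transpose_mult_mat_diag_mult[OF model_carriers(1) model_carriers(1) kl])
  also have "\<dots> = (\<Sum>m<d. B $$ (m,k) * (1 / Dx $$ (m,m)) * B $$ (m,l))
      + (\<Sum>m<card S. A $$ (pick S m, k) * (1 / sw (pick S m)) * A $$ (pick S m, l))"
    using kl by (simp add: sum_lessThan_add Lmat_def noise_var_def)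
  also have "\<dots> = (transpose_mat B * inv_mat Dx * B + transpose_mat AS * inv_mat DS * AS) $$ (k,l)"
    unfolding inv_Dx inv_DS
    using index_transpose_mult_mat_diag_mult[OF B B kl]
      index_transpose_mult_mat_diag_mult[OF AS_carrier AS_carrier kl] kl AS_carrier B
    by (simp add: AS_index)
  finally show "(transpose_mat Lmat * mat_diag n (\<lambda>m. 1 / noise_var m) * Lmat) $$ (k,l)
      = (transpose_mat B * inv_mat Dx * B + transpose_mat AS * inv_mat DS * AS) $$ (k,l)" .
qed (use AS_carrier in \<open>simp_all add: model_dims\<close>)

lemma C_core_eq_Kmat:
  "1\<^sub>m r + transpose_mat B * inv_mat Dx * B + transpose_mat AS * inv_mat DS * AS = Kmat"
proof -
  have "transpose_mat B * inv_mat Dx * B \<in> carrier_mat r r"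
    unfolding inv_Dx using B by (intro mult_carrier_mat[OF mult_carrier_mat[OF _ mat_diag_dim] B]) simp
  moreover have "transpose_mat AS * inv_mat DS * AS \<in> carrier_mat r r"
    unfolding inv_DS using AS_carrier
    by (intro mult_carrier_mat[OF mult_carrier_mat[OF _ mat_diag_dim] AS_carrier]) simp
  ultimately show ?thesis
    unfolding Kmat_def Lmat_congruence_split by (rule assoc_add_mat[OF one_carrier_mat])
qed

lemma C_mat_mult_gamma:
  "C_mat q sw Dx A B S *\<^sub>v \<gamma> = inv_mat Dx *\<^sub>v (B *\<^sub>v (inv_mat Kmat *\<^sub>v hvec))"
proof -
  let ?ASc = "submatrix A Sc UNIV"
  let ?F = "inv_mat Dx * B * inv_mat Kmat"
  let ?G = "?F * transpose_mat ?ASc"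
  let ?g = "vec (card Sc) (\<lambda>m. \<gamma> $ pick Sc m)"
  have Sc: "Sc \<subseteq> {..<dim_row A}" using parameter_dims by auto
  have ASc: "transpose_mat ?ASc \<in> carrier_mat r (card Sc)" using submatrix_rows(1)[OF Sc] parameter_dims by simp
  have F: "?F \<in> carrier_mat d r"
    unfolding inv_Dx by (rule mult_carrier_mat[OF mult_carrier_mat[OF mat_diag_dim B] Kmat_inverse(1)])
  have g: "?g \<in> carrier_vec (card Sc)" by simp
  have "C_mat q sw Dx A B S = mat d q (\<lambda>(i,j). if j \<in> Sc then ?G $$ (i, card {a \<in> Sc. a < j}) else 0)"
    unfolding C_mat_def Let_def parameter_dims C_core_eq_Kmat by (rule eq_matI) auto
  then have "C_mat q sw Dx A B S *\<^sub>v \<gamma> = ?G *\<^sub>v ?g"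
    using mult_vec_scatter_columns[OF _ mult_carrier_mat[OF F ASc] \<gamma>] by (simp add: subset_eq)
  also have "\<dots> = ?F *\<^sub>v (transpose_mat ?ASc *\<^sub>v ?g)" by (rule assoc_mult_mat_vec[OF F ASc g])
  also have "transpose_mat ?ASc *\<^sub>v ?g = hvec"
    using transpose_submatrix_rows_mult_vec[OF Sc] parameter_dims by (simp add: hvec_def)
  also have "?F *\<^sub>v hvec = inv_mat Dx *\<^sub>v (B *\<^sub>v (inv_mat Kmat *\<^sub>v hvec))"
    using assoc_mult_mat_vec[OF mult_carrier_mat[OF _ B] Kmat_inverse(1) model_carriers(3), of "inv_mat Dx" d]
      assoc_mult_mat_vec[OF _ B mult_mat_vec_carrier[OF Kmat_inverse(1) model_carriers(3)], of "inv_mat Dx" d]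
    by (simp add: inv_Dx)
  finally show ?thesis .
qed

end

theorem mainTheorem3:
  fixes M :: "'a measure"
    and d q r :: nat
    and Nz Nw Nx :: "nat \<Rightarrow> 'a \<Rightarrow> real" and Ny :: "'a \<Rightarrow> real"
    and sw :: "nat \<Rightarrow> real" and Dx :: "real mat" and sy :: real
    and A B :: "real mat" and \<beta> \<gamma> :: "real vec" and S :: "nat set"
  assumes "prob_space M"
    and "d \<ge> 1" "q \<ge> 1" "r \<ge> 1"
    and "A \<in> carrier_mat q r" and "B \<in> carrier_mat d r"
    and "\<beta> \<in> carrier_vec d" and "\<gamma> \<in> carrier_vec q"
    \<comment> \<open>mutual independence of N_z, N_w, N_x, N_y\<close>
    and "prob_space.indep_vars M (\<lambda>k. PiM {..<block_dim r q d k} (\<lambda>_. borel))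
                 (\<lambda>k \<omega>. restrict (\<lambda>i. noise_block Nz Nw Nx Ny k i \<omega>) {..<block_dim r q d k}) {0..<4}"
    and "\<And>i. i < r \<Longrightarrow> Nz i \<in> borel_measurable M \<and> integrable M (\<lambda>\<omega>. (Nz i \<omega>)\<^sup>2)"
    and "\<And>i. i < q \<Longrightarrow> Nw i \<in> borel_measurable M \<and> integrable M (\<lambda>\<omega>. (Nw i \<omega>)\<^sup>2)"
    and "\<And>i. i < d \<Longrightarrow> Nx i \<in> borel_measurable M \<and> integrable M (\<lambda>\<omega>. (Nx i \<omega>)\<^sup>2)"
    and "Ny \<in> borel_measurable M" "integrable M (\<lambda>\<omega>. (Ny \<omega>)\<^sup>2)"
    and "\<And>i. i < r \<Longrightarrow> (\<integral>\<omega>. Nz i \<omega> \<partial>M) = 0"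
    and "\<And>i. i < q \<Longrightarrow> (\<integral>\<omega>. Nw i \<omega> \<partial>M) = 0"
    and "\<And>i. i < d \<Longrightarrow> (\<integral>\<omega>. Nx i \<omega> \<partial>M) = 0"
    and "(\<integral>\<omega>. Ny \<omega> \<partial>M) = 0"
    and "\<And>i j. i < r \<Longrightarrow> j < r \<Longrightarrow> cov M (Nz i) (Nz j) = (if i = j then 1 else 0)"
    and "\<And>i. i < q \<Longrightarrow> sw i > 0"
    and "\<And>i j. i < q \<Longrightarrow> j < q \<Longrightarrow> cov M (Nw i) (Nw j) = (if i = j then sw i else 0)"
    and "Dx \<in> carrier_mat d d" "diagonal_mat Dx"
    and "\<And>v. v \<in> carrier_vec d \<Longrightarrow> v \<noteq> 0\<^sub>v d \<Longrightarrow> v \<bullet> (Dx *\<^sub>v v) > 0"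
    and "\<And>i j. i < d \<Longrightarrow> j < d \<Longrightarrow> cov M (Nx i) (Nx j) = Dx $$ (i, j)"
    and "cov M Ny Ny = sy"
    and "S \<subseteq> {0..<q}"
  shows "beta_hat M d S (sem_X B Nz Nx) (sem_W A Nz Nw) (sem_Y A B \<beta> \<gamma> Nz Nw Nx Ny)
           = \<beta> + C_mat q sw Dx A B S *\<^sub>v \<gamma>"
proof -
  interpret linear_sem M d q r Nz Nw Nx Ny sw Dx sy A B \<beta> \<gamma> S
    by (intro linear_sem.intro linear_sem_axioms.intro) (fact assms)+
  show ?thesis by (simp only: beta_hat_eq C_mat_mult_gamma)
qed

end
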